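(* Fix $\lambda>0$ and let $M_\lambda$ be as in the context. Then for all $x\ge3$, \[ \inf_{x-1\le t\le x}M'_\lambda(t)\le\inf_{x\le t\le x+1}M'_\lambda(t)\le \sup_{x\le t\le x+1}M'_\lambda(t)\le \sup_{x-1\le t\le x}M'_\lambda(t). \]
   Context: For $\lambda>0$, $M_\lambda:[0,\infty)\to\mathbb R$ is defined by $M_\lambda(x)=0$ for $0\le x\le1$ and, for all $x>0$, $M_{\lambda}(x+1)=\int_0^x\frac{\lambda e^{-\lambda t}}{1-e^{-\lambda x}}\bigl(M_{\lambda}(t)+M_{\lambda}(x-t)\bigr)\,dt+1$. $M_\lambda(x)$ is the expected number of unit intervals at saturation in the parking process on $(0,x)$ with truncated exponential left-endpoint density. $M_\lambda$ is differentiable on $(2,\infty)$, which is the range where the derivatives in the claim are evaluated. *)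

theory Defs
  imports "HOL-Analysis.Analysis"
begin

end

theory Submission
  imports Defs
begin

(* With W c y = integral over [0, y] of exp (c t) M t and rho y = lam / (exp (lam y) - 1), the
   recursion reads M (y + 1) = 1 + (rho y + lam) W (-lam) y + rho y W lam y. Differentiating twice
   and using rho' = - rho (rho + lam) shows that D y = M' (y + 1) satisfies the delay equation
   D' y = (2 rho y + lam) (D (y - 1) - D y) for y > 2. So D cannot leave the range of its values
   one unit earlier: at a maximum of D above that range, D' would be negative, and symmetrically
   for minima. Read back through D (y - 1) = M' y, the values of M' on [x, x + 1] stay within the
   range of M' on [x - 1, x]. *)

lemma le_bound_if_deriv_neg_above:
  fixes f :: "real \<Rightarrow> real"
  assumes cont: "continuous_on {a..b} f" and start: "f a \<le> K"
    and deriv_neg: "\<And>y. y \<in> {a<..b} \<Longrightarrow> K < f y \<Longrightarrow>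
      \<exists>f'. (f has_real_derivative f') (at y) \<and> f' < 0"
    and y: "y \<in> {a..b}"
  shows "f y \<le> K"
proof (rule ccontr)
  assume "\<not> f y \<le> K"
  obtain z where z: "z \<in> {a..b}" and z_max: "\<forall>u\<in>{a..b}. f u \<le> f z"
    using continuous_attains_sup[OF compact_Icc _ cont] y by auto
  have "K < f z" using \<open>\<not> f y \<le> K\<close> z_max y by force
  with start z have "z \<in> {a<..b}" by (cases "z = a") auto
  with deriv_neg \<open>K < f z\<close> obtain f' where "(f has_real_derivative f') (at z)" "f' < 0"
    by blast
  then obtain d where "d > 0" and dec: "\<And>h. 0 < h \<Longrightarrow> h < d \<Longrightarrow> f z < f (z - h)"
    using DERIV_neg_dec_left by blast
  define h where "h = min (d / 2) (z - a)"
  have "0 < h" "h < d" "z - h \<in> {a..b}"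
    using \<open>d > 0\<close> \<open>z \<in> {a<..b}\<close> by (auto simp: h_def)
  then show False using dec z_max by force
qed

lemma delay_equation_range:
  fixes f g c :: "real \<Rightarrow> real"
  assumes cont: "continuous_on {a..b} f" and start: "f a \<in> {lo..hi}"
    and deriv: "\<And>y. y \<in> {a<..b} \<Longrightarrow>
      (f has_real_derivative c y * (g y - f y)) (at y)"
    and c_pos: "\<And>y. y \<in> {a<..b} \<Longrightarrow> 0 < c y"
    and g_range: "\<And>y. y \<in> {a<..b} \<Longrightarrow> g y \<in> {lo..hi}"
    and y: "y \<in> {a..b}"
  shows "f y \<in> {lo..hi}"
unfolding atLeastAtMost_iff
proof
  show "lo \<le> f y"
  proof -
    have "- f y \<le> - lo"
    proof (rule le_bound_if_deriv_neg_above[where f = "\<lambda>u. - f u",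
          OF continuous_on_minus[OF cont] _ _ y])
      fix u assume "u \<in> {a<..b}" "- lo < - f u"
      moreover have "lo \<le> g u" using g_range \<open>u \<in> {a<..b}\<close> by simp
      ultimately show "\<exists>f'. ((\<lambda>u. - f u) has_real_derivative f') (at u) \<and> f' < 0"
        using deriv c_pos
        by (intro exI[of _ "- (c u * (g u - f u))"]) (simp add: DERIV_minus)
    qed (use start in auto)
    then show ?thesis by simp
  qed
next
  show "f y \<le> hi"
  proof (rule le_bound_if_deriv_neg_above[OF cont _ _ y])
    fix u assume "u \<in> {a<..b}" "hi < f u"
    moreover have "g u \<le> hi" using g_range \<open>u \<in> {a<..b}\<close> by simp
    ultimately show "\<exists>f'. (f has_real_derivative f') (at u) \<and> f' < 0"
      using deriv c_pos by (intro exI[of _ "c u * (g u - f u)"]) (simp add: mult_pos_neg)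
  qed (use start in auto)
qed

lemma has_integral_reflect_Icc:
  fixes f :: "real \<Rightarrow> 'a::banach"
  assumes "(f has_integral I) {a..b}"
  shows "((\<lambda>t. f (a + b - t)) has_integral I) {a..b}"
  using has_integral_affinity[OF assms[unfolded box_real(2)[symmetric]], of "-1" "a + b"]
  by (auto simp: image_affinity_cbox)

locale parking =
  fixes lam :: real and M :: "real \<Rightarrow> real"
  assumes lam_pos: "lam > 0"
    and init: "\<forall>y\<in>{0..1}. M y = 0"
    and rec: "\<forall>y>0. M (y + 1) =
        integral {0..y} (\<lambda>t. lam * exp (- lam * t) / (1 - exp (- lam * y)) * (M t + M (y - t))) + 1"
begin

definition W :: "real \<Rightarrow> real \<Rightarrow> real" where
  "W c y = integral {0..y} (\<lambda>t. exp (c * t) * M t)"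

definition rho :: "real \<Rightarrow> real" where
  "rho y = lam / (exp (lam * y) - 1)"

definition Mshift :: "real \<Rightarrow> real" where
  "Mshift y = 1 + (rho y + lam) * W (- lam) y + rho y * W lam y"

definition D :: "real \<Rightarrow> real" where
  "D y = (2 * rho y + lam) * M y - rho y * (rho y + lam) * (W (- lam) y + W lam y)"

lemma rho_mult_exp: "0 < y \<Longrightarrow> rho y * exp (lam * y) = rho y + lam"
  using lam_pos by (simp add: rho_def field_simps)

lemma rho_plus_lam_mult_exp: "0 < y \<Longrightarrow> (rho y + lam) * exp (- lam * y) = rho y"
  by (simp flip: rho_mult_exp add: exp_minus)

lemma M_eq_1: assumes "1 < y" "y \<le> 2" shows "M y = 1"
proof -
  have "M (y - 1 + 1) = integral {0..y - 1}
      (\<lambda>t. lam * exp (- lam * t) / (1 - exp (- lam * (y - 1))) * (M t + M (y - 1 - t))) + 1"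
    using rec[rule_format, of "y - 1"] assms by simp
  also have "\<dots> = 1"
    by (subst integral_cong[where g = "\<lambda>_. 0"]) (use init assms in auto)
  finally show ?thesis by simp
qed

lemma M_plus_one_eq_Mshift:
  assumes y: "0 < y"
    and int_neg: "(\<lambda>t. exp (- lam * t) * M t) integrable_on {0..y}"
    and int_pos: "(\<lambda>t. exp (lam * t) * M t) integrable_on {0..y}"
  shows "M (y + 1) = Mshift y"
proof -
  have "((\<lambda>t. exp (lam * (y - t)) * M (y - t)) has_integral W lam y) {0..y}"
    using has_integral_reflect_Icc[OF integrable_integral[OF int_pos]] unfolding W_def by simp
  then have split_integral: "((\<lambda>t. (rho y + lam) * (exp (- lam * t) * M t)
        + rho y * (exp (lam * (y - t)) * M (y - t)))
      has_integral (rho y + lam) * W (- lam) y + rho y * W lam y) {0..y}"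
    using integrable_integral[OF int_neg] unfolding W_def
    by (intro has_integral_add has_integral_mult_right)
  have split_integrand: "lam * exp (- lam * t) / (1 - exp (- lam * y)) * (M t + M (y - t))
      = (rho y + lam) * (exp (- lam * t) * M t) + rho y * (exp (lam * (y - t)) * M (y - t))" for t
  proof -
    have "lam / (1 - exp (- lam * y)) = rho y + lam"
      using y lam_pos by (simp add: rho_def exp_minus field_simps)
    then have "lam * exp (- lam * t) / (1 - exp (- lam * y)) * (M t + M (y - t))
        = (rho y + lam) * (exp (- lam * t) * M t)
          + (rho y + lam) * exp (- lam * y) * (exp (lam * (y - t)) * M (y - t))"
      by (simp flip: exp_add add: algebra_simps times_divide_eq_left[symmetric])
    then show ?thesis
      using rho_plus_lam_mult_exp[OF y] by simp
  qed
  have "integral {0..y} (\<lambda>t. lam * exp (- lam * t) / (1 - exp (- lam * y)) * (M t + M (y - t)))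
      = (rho y + lam) * W (- lam) y + rho y * W lam y"
    unfolding split_integrand by (rule integral_unique[OF split_integral])
  then show ?thesis
    using rec y unfolding Mshift_def by simp
qed

(* M jumps from 0 to 1 at t = 1, so continuity on closed intervals needs its right limit there. *)
lemma continuous_on_M_extended:
  assumes "continuous_on {1<..X} M"
  shows "continuous_on {1..X} (\<lambda>t. if t \<le> 1 then 1 else M t)"
proof -
  have "continuous_on {1..2} (\<lambda>t. if t \<le> 1 then 1 else M t)"
    by (rule continuous_on_eq[OF continuous_on_const]) (auto simp: M_eq_1)
  moreover have "continuous_on {2..X} (\<lambda>t. if t \<le> 1 then 1 else M t)"
    by (rule continuous_on_eq[OF continuous_on_subset[OF assms]]) auto
  ultimately have "continuous_on ({1..2} \<union> {2..X}) (\<lambda>t. if t \<le> 1 then 1 else M t)"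
    by (intro continuous_on_closed_Un) auto
  then show ?thesis by (rule continuous_on_subset) auto
qed

lemma integrable_weighted_M_on:
  assumes X: "1 \<le> X" and cont: "continuous_on {1<..X} M"
  shows "(\<lambda>t. exp (c * t) * M t) integrable_on {0..X}"
proof (rule Henstock_Kurzweil_Integration.integrable_combine[of 0 1 X])
  show "(\<lambda>t. exp (c * t) * M t) integrable_on {0..1}"
    by (rule integrable_eq[of "\<lambda>_. 0"]) (use init in auto)
  have "(\<lambda>t. exp (c * t) * (if t \<le> 1 then 1 else M t)) integrable_on {1..X}"
    by (intro integrable_continuous_interval continuous_intros continuous_on_M_extended cont)
  then show "(\<lambda>t. exp (c * t) * M t) integrable_on {1..X}"
    by (rule integrable_spike_finite[of "{1}", rotated 2]) auto
qed (use X in auto)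

lemma continuous_on_M_step:
  assumes X: "1 \<le> X" and cont: "continuous_on {1<..X} M"
  shows "continuous_on {1<..X + 1} M"
proof -
  have W_cont: "continuous_on {0..X} (W c)" for c
    unfolding W_def by (rule indefinite_integral_continuous_1[OF integrable_weighted_M_on[OF X cont]])
  have "continuous_on {0<..X} rho"
    unfolding rho_def using lam_pos by (intro continuous_intros) auto
  then have "continuous_on {0<..X} Mshift"
    unfolding Mshift_def by (intro continuous_intros continuous_on_subset[OF W_cont]) auto
  then have "continuous_on {1<..X + 1} (\<lambda>z. Mshift (z - 1))"
    by (rule continuous_on_compose2) (intro continuous_intros, auto)
  moreover have "Mshift (z - 1) = M z" if "z \<in> {1<..X + 1}" for z
  proof -
    have "M (z - 1 + 1) = Mshift (z - 1)"
      using that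
      by (intro M_plus_one_eq_Mshift integrable_on_subinterval[OF integrable_weighted_M_on[OF X cont]])
        auto
    then show ?thesis by simp
  qed
  ultimately show ?thesis by (rule continuous_on_eq)
qed

lemma continuous_on_M_upto: "continuous_on {1<..1 + real n} M"
proof (induction n)
  case (Suc n)
  then show ?case
    using continuous_on_M_step[of "1 + real n"] by (simp add: add.assoc)
qed simp

lemma isCont_M: assumes "1 < y" shows "isCont M y"
proof -
  obtain n :: nat where "y < real n"
    using reals_Archimedean2 by blast
  moreover have "continuous_on {1<..<real n} M"
    by (rule continuous_on_subset[OF continuous_on_M_upto[of n]]) auto
  ultimately show ?thesis
    using assms continuous_on_interior[of "{1<..<real n}" M y] by (simp add: interior_open)
qed

lemma integrable_weighted_M: "(\<lambda>t. exp (c * t) * M t) integrable_on {0..y}"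
proof -
  have "continuous_on {1<..max 1 y} M"
    using isCont_M by (intro continuous_at_imp_continuous_on) auto
  then have "(\<lambda>t. exp (c * t) * M t) integrable_on {0..max 1 y}"
    by (intro integrable_weighted_M_on) auto
  then show ?thesis by (rule integrable_on_subinterval) auto
qed

lemma M_plus_one: "0 < y \<Longrightarrow> M (y + 1) = Mshift y"
  by (intro M_plus_one_eq_Mshift integrable_weighted_M)

lemma rho_pos: "0 < y \<Longrightarrow> 0 < rho y"
  using lam_pos by (simp add: rho_def)

lemma has_real_derivative_rho:
  assumes "0 < y" shows "(rho has_real_derivative - rho y * (rho y + lam)) (at y)"
proof -
  have "exp (lam * y) \<noteq> 1" using assms lam_pos by simp
  show ?thesis
    unfolding rho_def[abs_def]
    by (rule derivative_eq_intros refl)+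
      (use \<open>exp (lam * y) \<noteq> 1\<close> in \<open>simp_all add: field_simps power2_eq_square\<close>)
qed

lemma has_real_derivative_W:
  assumes "1 < y" shows "(W c has_real_derivative exp (c * y) * M y) (at y)"
proof -
  have cont: "isCont (\<lambda>t. exp (c * t) * M t) y"
    using isCont_M[OF assms] by (intro continuous_intros)
  have "((\<lambda>u. integral {0..u} (\<lambda>t. exp (c * t) * M t)) has_vector_derivative exp (c * y) * M y)
      (at y within ({0..y + 1} - {}))"
    by (rule integral_has_vector_derivative_continuous_at[OF integrable_weighted_M _ _
        continuous_at_imp_continuous_at_within[OF cont]]) (use assms in auto)
  then show ?thesis
    using assms
    by (simp add: W_def[abs_def] at_within_Icc_at has_real_derivative_iff_has_vector_derivative)
qed

lemma has_real_derivative_Mshift: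
  assumes y: "1 < y" shows "(Mshift has_real_derivative D y) (at y)"
proof -
  have "(Mshift has_real_derivative
      ((rho y + lam) * exp (- lam * y) + rho y * exp (lam * y)) * M y
      - rho y * (rho y + lam) * (W (- lam) y + W lam y)) (at y)"
    unfolding Mshift_def[abs_def] using y
    by (auto intro!: derivative_eq_intros has_real_derivative_rho has_real_derivative_W
        simp: algebra_simps)
  moreover have "(rho y + lam) * exp (- lam * y) + rho y * exp (lam * y) = 2 * rho y + lam"
    using y rho_mult_exp[of y] rho_plus_lam_mult_exp[of y] by simp
  ultimately show ?thesis by (simp only: D_def)
qed

lemma has_real_derivative_M:
  assumes z: "2 < z" shows "(M has_real_derivative D (z - 1)) (at z)"
proof -
  have "((\<lambda>y. M (y + 1)) has_real_derivative D (z - 1)) (at (z - 1))"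
    by (rule has_field_derivative_transform_within_open[OF has_real_derivative_Mshift,
          where S = "{0<..}"])
       (use z M_plus_one in auto)
  then show ?thesis using DERIV_shift[of M "D (z - 1)" "z - 1" 1] by simp
qed

lemma has_real_derivative_D:
  assumes y: "2 < y"
  shows "(D has_real_derivative (2 * rho y + lam) * (D (y - 1) - D y)) (at y)"
proof -
  define r d where "r = rho y" and "d = D (y - 1)"
  have "(D has_real_derivative
      (2 * r + lam) * d + r * (r + lam) * (2 * r + lam) * (W (- lam) y + W lam y)
      - (2 * r * (r + lam) + r * ((r + lam) * exp (- lam * y)) + (r + lam) * (r * exp (lam * y)))
        * M y) (at y)"
    unfolding D_def[abs_def] r_def using y
    by (auto intro!: derivative_eq_intros has_real_derivative_rho has_real_derivative_W
        has_real_derivative_M[OF y, folded d_def] simp: algebra_simps)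
  moreover have "r * exp (lam * y) = r + lam" "(r + lam) * exp (- lam * y) = r"
    unfolding r_def using y rho_mult_exp[of y] rho_plus_lam_mult_exp[of y] by simp_all
  ultimately have "(D has_real_derivative
      (2 * r + lam) * d + r * (r + lam) * (2 * r + lam) * (W (- lam) y + W lam y)
      - (2 * r * (r + lam) + r * r + (r + lam) * (r + lam)) * M y) (at y)"
    by (simp only:)
  moreover have "(2 * r + lam) * d + r * (r + lam) * (2 * r + lam) * (W (- lam) y + W lam y)
      - (2 * r * (r + lam) + r * r + (r + lam) * (r + lam)) * M y = (2 * r + lam) * (d - D y)"
    by (simp add: D_def r_def algebra_simps)
  ultimately show ?thesis by (simp add: r_def d_def)
qed

lemma deriv_M: "2 < z \<Longrightarrow> deriv M z = D (z - 1)"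
  by (rule DERIV_imp_deriv[OF has_real_derivative_M])

lemma isCont_D: assumes "1 < y" shows "isCont D y"
  unfolding D_def[abs_def] using assms
  by (intro continuous_intros isCont_M DERIV_isCont[OF has_real_derivative_rho]
      DERIV_isCont[OF has_real_derivative_W]) auto

lemma bounded_D: "bounded (D ` {1<..X})"
proof -
  define D1 where "D1 y = (2 * rho y + lam) * (if y \<le> 1 then 1 else M y)
      - rho y * (rho y + lam) * (W (- lam) y + W lam y)" for y
  have M_cont: "continuous_on {1<..X} M"
    using isCont_M by (intro continuous_at_imp_continuous_on) auto
  have W_cont: "continuous_on {1..X} (W c)" for c
    unfolding W_def
    by (rule continuous_on_subset[OF indefinite_integral_continuous_1[OF integrable_weighted_M]])
      auto
  have rho_cont: "continuous_on {1..X} rho"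
    by (intro continuous_at_imp_continuous_on ballI DERIV_isCont[OF has_real_derivative_rho]) auto
  have "continuous_on {1..X} D1"
    unfolding D1_def
    by (intro continuous_intros continuous_on_M_extended M_cont W_cont rho_cont)
  then have "bounded (D1 ` {1..X})"
    by (intro compact_imp_bounded compact_continuous_image) auto
  moreover have "D ` {1<..X} \<subseteq> D1 ` {1..X}"
  proof
    fix v assume "v \<in> D ` {1<..X}"
    then obtain y where "y \<in> {1<..X}" "v = D y" by auto
    then show "v \<in> D1 ` {1..X}" by (intro image_eqI[of _ _ y]) (auto simp: D_def D1_def)
  qed
  ultimately show ?thesis by (rule bounded_subset)
qed

lemma bounded_deriv_M: assumes "2 \<le> a" shows "bounded (deriv M ` {a..b})"
proof -
  have "deriv M t \<in> insert (deriv M a) (D ` {1<..b - 1})" if t: "t \<in> {a..b}" for t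
  proof (cases "t = a")
    case False
    with assms t have "deriv M t = D (t - 1)" "t - 1 \<in> {1<..b - 1}" by (auto simp: deriv_M)
    then show ?thesis by simp
  qed simp
  then have "deriv M ` {a..b} \<subseteq> insert (deriv M a) (D ` {1<..b - 1})" by blast
  then show ?thesis by (rule bounded_subset[rotated]) (simp add: bounded_D)
qed

lemma deriv_M_range_propagates:
  assumes x: "3 \<le> x" and t: "t \<in> {x..x + 1}"
  shows "deriv M t \<in> {Inf (deriv M ` {x - 1..x})..Sup (deriv M ` {x - 1..x})}"
proof -
  define S where "S = deriv M ` {x - 1..x}"
  have "bounded S" unfolding S_def using x by (intro bounded_deriv_M) simp
  then have bdd: "bdd_below S" "bdd_above S"
    by (simp_all add: bounded_imp_bdd_below bounded_imp_bdd_above)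
  have S_range: "deriv M u \<in> {Inf S..Sup S}" if "u \<in> {x - 1..x}" for u
  proof -
    have "deriv M u \<in> S" using that by (simp add: S_def)
    then show ?thesis using bdd by (simp add: cInf_lower cSup_upper)
  qed
  have "D (t - 1) \<in> {Inf S..Sup S}"
  proof (rule delay_equation_range[where f = D and g = "\<lambda>y. D (y - 1)"
        and c = "\<lambda>y. 2 * rho y + lam" and a = "x - 1" and b = x])
    show "continuous_on {x - 1..x} D"
      using x by (intro continuous_at_imp_continuous_on ballI isCont_D) auto
    show "D (x - 1) \<in> {Inf S..Sup S}"
      using S_range[of x] deriv_M[of x] x by simp
    fix y assume y: "y \<in> {x - 1<..x}"
    show "(D has_real_derivative (2 * rho y + lam) * (D (y - 1) - D y)) (at y)"
      using x y by (intro has_real_derivative_D) auto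
    show "0 < 2 * rho y + lam"
      using rho_pos[of y] lam_pos x y by simp
    show "D (y - 1) \<in> {Inf S..Sup S}"
      using S_range[of y] deriv_M[of y] x y by simp
  qed (use t in auto)
  then show ?thesis
    using deriv_M[of t] x t by (simp add: S_def)
qed

end

theorem mainTheorem9:
  fixes lam x :: real and M :: "real \<Rightarrow> real"
  assumes lam_pos: "lam > 0"
    and init: "\<forall>y\<in>{0..1}. M y = 0"
    and rec: "\<forall>y>0. M (y + 1) =
        integral {0..y} (\<lambda>t. lam * exp (- lam * t) / (1 - exp (- lam * y)) * (M t + M (y - t))) + 1"
    and x_ge: "x \<ge> 3"
  shows "Inf (deriv M ` {x - 1..x}) \<le> Inf (deriv M ` {x..x + 1})
       \<and> Inf (deriv M ` {x..x + 1}) \<le> Sup (deriv M ` {x..x + 1})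
       \<and> Sup (deriv M ` {x..x + 1}) \<le> Sup (deriv M ` {x - 1..x})"
proof -
  interpret parking lam M
    using lam_pos init rec by unfold_locales
  let ?S1 = "deriv M ` {x - 1..x}" and ?S2 = "deriv M ` {x..x + 1}"
  have range: "Inf ?S1 \<le> v \<and> v \<le> Sup ?S1" if "v \<in> ?S2" for v
    using that deriv_M_range_propagates[OF x_ge] by auto
  have "?S2 \<noteq> {}" using x_ge by auto
  moreover have "bounded ?S2" using x_ge by (intro bounded_deriv_M) simp
  ultimately show ?thesis
    using range
    by (meson cInf_greatest cSup_least cInf_le_cSup bounded_imp_bdd_below bounded_imp_bdd_above)
qed

end
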